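(* Let $f,g\in\mathbb{R}[x_1,\dots,x_n]$ be forms, where $f$ is nonconstant with strictly positive coefficients and $g(x)>0$ for all $x\in\mathbb{R}_+^n\setminus\{0\}$. Then there exists an integer $l\ge1$ such that all coefficients of $f^lg$ are nonnegative.
   Context: A form is a homogeneous polynomial. A form $f=\sum_{|w|=d}a_wx^w$ of degree $d$ has strictly positive coefficients if $a_w>0$ for every $w\in\mathbb{Z}_{\ge0}^n$ with $|w|=d$. $\mathbb{R}_+^n=\{x\in\mathbb{R}^n: x_i\ge0\ \forall i\}$. *)

theory Defs
  imports Complex_Main "HOL-Library.Poly_Mapping"
begin

text \<open>Polynomials in the variables x_0,...,x_(n-1) with real coefficients are represented
  as finitely supported maps from exponent vectors to coefficients.\<close>

type_synonym rpoly = "(nat \<Rightarrow>\<^sub>0 nat) \<Rightarrow>\<^sub>0 real"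

definition monomials :: "nat \<Rightarrow> nat \<Rightarrow> (nat \<Rightarrow>\<^sub>0 nat) set" where
  "monomials n d = {w. Poly_Mapping.keys w \<subseteq> {..<n} \<and> (\<Sum>i<n. Poly_Mapping.lookup w i) = d}"

definition is_form :: "nat \<Rightarrow> nat \<Rightarrow> rpoly \<Rightarrow> bool" where
  "is_form n d p \<longleftrightarrow> Poly_Mapping.keys p \<subseteq> monomials n d"

definition strictly_pos_coeffs :: "nat \<Rightarrow> nat \<Rightarrow> rpoly \<Rightarrow> bool" where
  "strictly_pos_coeffs n d p \<longleftrightarrow> (\<forall>w\<in>monomials n d. Poly_Mapping.lookup p w > 0)"

definition nonconstant :: "rpoly \<Rightarrow> bool" where
  "nonconstant p \<longleftrightarrow> (\<exists>w\<in>Poly_Mapping.keys p. w \<noteq> 0)"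

definition peval :: "nat \<Rightarrow> rpoly \<Rightarrow> (nat \<Rightarrow> real) \<Rightarrow> real" where
  "peval n p x = (\<Sum>w\<in>Poly_Mapping.keys p. Poly_Mapping.lookup p w * (\<Prod>i<n. x i ^ Poly_Mapping.lookup w i))"

end

theory Submission
  imports Defs "HOL-Analysis.Analysis"
begin

text \<open>Let S = x_0 + ... + x_(n-1). By Polya's theorem S^N g has strictly positive coefficients
  for large N: up to a positive factor, the coefficient of x^w in S^N g is a falling-factorial
  evaluation of g at w / |w|, which differs from g(w / |w|) \<ge> min g > 0 (minimum over the simplex)
  by O(1/N). Since f has strictly positive coefficients, c S^d \<le> f \<le> C S^d coefficientwise.
  Writing f = c S^d + h with 0 \<le> h \<le> C S^d, we get f^l g = \<Sum>k binom(l,k) c^k h^(l-k) S^(dk) g.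
  The terms with k \<ge> N have nonnegative coefficients, and the coefficients of each term with
  k < N are dominated by those of the term k + N, since binom(l, k+N) / binom(l, k) grows with l.\<close>

section \<open>Coefficientwise order\<close>

definition nonneg_coeffs :: "('a \<Rightarrow>\<^sub>0 real) \<Rightarrow> bool" where
  "nonneg_coeffs p \<longleftrightarrow> (\<forall>w. 0 \<le> Poly_Mapping.lookup p w)"

definition coeff_le :: "('a \<Rightarrow>\<^sub>0 real) \<Rightarrow> ('a \<Rightarrow>\<^sub>0 real) \<Rightarrow> bool" where
  "coeff_le p q \<longleftrightarrow> (\<forall>w. Poly_Mapping.lookup p w \<le> Poly_Mapping.lookup q w)"

lemma coeff_le_iff_nonneg_coeffs_diff: "coeff_le p q \<longleftrightarrow> nonneg_coeffs (q - p)"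
  unfolding coeff_le_def nonneg_coeffs_def by (simp add: lookup_minus)

lemma coeff_le_trans: "coeff_le p q \<Longrightarrow> coeff_le q r \<Longrightarrow> coeff_le p r"
  unfolding coeff_le_def by (meson order_trans)

lemma lookup_mult_keys:
  fixes p q :: "'a::comm_monoid_add \<Rightarrow>\<^sub>0 real"
  shows "Poly_Mapping.lookup (p * q) w =
    (\<Sum>u\<in>Poly_Mapping.keys p. \<Sum>v\<in>Poly_Mapping.keys q.
       Poly_Mapping.lookup p u * Poly_Mapping.lookup q v when w = u + v)"
proof -
  have inner: "Sum_any (\<lambda>v. Poly_Mapping.lookup q v when w = u + v) =
      (\<Sum>v\<in>Poly_Mapping.keys q. Poly_Mapping.lookup q v when w = u + v)" for u
    by (rule Sum_any.expand_superset) (auto simp: in_keys_iff)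
  have "Poly_Mapping.lookup (p * q) w = Sum_any (\<lambda>u. Poly_Mapping.lookup p u *
      (\<Sum>v\<in>Poly_Mapping.keys q. Poly_Mapping.lookup q v when w = u + v))"
    by (simp add: lookup_mult inner)
  also have "\<dots> = (\<Sum>u\<in>Poly_Mapping.keys p. Poly_Mapping.lookup p u *
      (\<Sum>v\<in>Poly_Mapping.keys q. Poly_Mapping.lookup q v when w = u + v))"
    by (rule Sum_any.expand_superset) (auto simp: in_keys_iff)
  finally show ?thesis
    by (simp add: sum_distrib_left mult_when)
qed

lemma lookup_single_0_mult [simp]:
  "Poly_Mapping.lookup (Poly_Mapping.single 0 c * p) w = c * Poly_Mapping.lookup p w"
  unfolding mult_map_scale_conv_mult[symmetric] by transfer (simp add: when_def)

lemma nonneg_coeffs_mult: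
  fixes p q :: "'a::comm_monoid_add \<Rightarrow>\<^sub>0 real"
  shows "nonneg_coeffs p \<Longrightarrow> nonneg_coeffs q \<Longrightarrow> nonneg_coeffs (p * q)"
  unfolding nonneg_coeffs_def lookup_mult_keys
  by (auto intro!: sum_nonneg simp: when_def)

lemma nonneg_coeffs_power:
  fixes p :: "'a::comm_monoid_add \<Rightarrow>\<^sub>0 real"
  shows "nonneg_coeffs p \<Longrightarrow> nonneg_coeffs (p ^ k)"
  by (induction k) (simp add: nonneg_coeffs_def lookup_one when_def, simp add: nonneg_coeffs_mult)

lemma nonneg_coeffs_sum:
  "(\<And>i. i \<in> A \<Longrightarrow> nonneg_coeffs (f i)) \<Longrightarrow> nonneg_coeffs (sum f A)"
  unfolding nonneg_coeffs_def by (auto simp: lookup_sum intro!: sum_nonneg)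

lemma coeff_le_mult_left:
  fixes p q r :: "'a::comm_monoid_add \<Rightarrow>\<^sub>0 real"
  shows "nonneg_coeffs r \<Longrightarrow> coeff_le p q \<Longrightarrow> coeff_le (r * p) (r * q)"
  unfolding coeff_le_iff_nonneg_coeffs_diff by (metis nonneg_coeffs_mult right_diff_distrib)

lemma coeff_le_power:
  fixes p q :: "'a::comm_monoid_add \<Rightarrow>\<^sub>0 real"
  assumes "nonneg_coeffs p" "coeff_le p q"
  shows "coeff_le (p ^ k) (q ^ k)"
proof (induction k)
  case 0
  then show ?case by (simp add: coeff_le_def)
next
  case (Suc k)
  have "nonneg_coeffs q"
    using assms unfolding coeff_le_def nonneg_coeffs_def by (meson order_trans)
  then have "coeff_le (q ^ k * p) (q ^ k * q)"
    using assms(2) by (intro coeff_le_mult_left nonneg_coeffs_power)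
  moreover have "coeff_le (p * p ^ k) (p * q ^ k)"
    using assms(1) Suc.IH by (rule coeff_le_mult_left)
  ultimately show ?case
    by (simp add: coeff_le_trans mult.commute)
qed

section \<open>Forms and powers of the sum of the variables\<close>

lemma monomials_add:
  "u \<in> monomials n a \<Longrightarrow> v \<in> monomials n b \<Longrightarrow> u + v \<in> monomials n (a + b)"
  unfolding monomials_def using keys_add[of u v] by (auto simp: lookup_add sum.distrib)

lemma lookup_le_degree: "w \<in> monomials n a \<Longrightarrow> i < n \<Longrightarrow> Poly_Mapping.lookup w i \<le> a"
  unfolding monomials_def using member_le_sum[of i "{..<n}" "Poly_Mapping.lookup w"] by auto

lemma is_form_mult: "is_form n a p \<Longrightarrow> is_form n b q \<Longrightarrow> is_form n (a + b) (p * q)"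
  unfolding is_form_def using keys_mult[of p q] monomials_add by blast

lemma is_form_power: "is_form n a p \<Longrightarrow> is_form n (a * k) (p ^ k)"
proof (induction k)
  case 0
  have "0 \<in> monomials n 0" by (simp add: monomials_def)
  then show ?case by (simp add: is_form_def)
next
  case (Suc k)
  then show ?case using is_form_mult[of n a p "a * k" "p ^ k"] by (simp add: add.commute)
qed

lemma is_form_sum: "(\<And>i. i \<in> A \<Longrightarrow> is_form n a (f i)) \<Longrightarrow> is_form n a (sum f A)"
  unfolding is_form_def using keys_sum[of f A] by blast

lemma nonconstant_form_pos:
  assumes "is_form n d f" "nonconstant f"
  shows "0 < n" "0 < d"
proof -
  obtain w i where w: "w \<in> monomials n d" and i: "i \<in> Poly_Mapping.keys w"
    using assms unfolding is_form_def nonconstant_def by (metis keys_eq_empty equals0I subsetD)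
  then have "i < n"
    by (auto simp: monomials_def)
  moreover have "0 < Poly_Mapping.lookup w i"
    using i by (simp add: in_keys_iff)
  ultimately show "0 < n" "0 < d"
    using lookup_le_degree[OF w] by fastforce+
qed

lemma add_eq_iff_lookup_le:
  fixes u v w :: "'a \<Rightarrow>\<^sub>0 nat"
  shows "w = u + v \<longleftrightarrow> (\<forall>i. Poly_Mapping.lookup v i \<le> Poly_Mapping.lookup w i) \<and> u = w - v"
  by (auto simp: lookup_add lookup_minus poly_mapping_eq_iff fun_eq_iff
      intro: le_add2 dest: spec[of _ "\<lambda>x. x"])

lemma lookup_mult_right:
  fixes p q :: rpoly
  shows "Poly_Mapping.lookup (p * q) w = (\<Sum>v\<in>Poly_Mapping.keys q.
    Poly_Mapping.lookup p (w - v) * Poly_Mapping.lookup q v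
      when (\<forall>i. Poly_Mapping.lookup v i \<le> Poly_Mapping.lookup w i))"
proof -
  have "Poly_Mapping.lookup (p * q) w = (\<Sum>v\<in>Poly_Mapping.keys q. \<Sum>u\<in>Poly_Mapping.keys p.
      Poly_Mapping.lookup p u * Poly_Mapping.lookup q v when w = u + v)"
    by (simp add: lookup_mult_keys sum.swap[of _ "Poly_Mapping.keys p"])
  also have "\<dots> = (\<Sum>v\<in>Poly_Mapping.keys q. \<Sum>u\<in>Poly_Mapping.keys p.
      if u = w - v then Poly_Mapping.lookup p u * Poly_Mapping.lookup q v
        when (\<forall>i. Poly_Mapping.lookup v i \<le> Poly_Mapping.lookup w i) else 0)"
    by (intro sum.cong refl) (auto simp: add_eq_iff_lookup_le when_def)
  also have "\<dots> = (\<Sum>v\<in>Poly_Mapping.keys q. Poly_Mapping.lookup p (w - v) * Poly_Mapping.lookup q v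
      when (\<forall>i. Poly_Mapping.lookup v i \<le> Poly_Mapping.lookup w i))"
    by (intro sum.cong refl) (auto simp: in_keys_iff when_def)
  finally show ?thesis .
qed

lemma monomials_diff:
  assumes "w \<in> monomials n (a + b)" "v \<in> monomials n b"
    and "\<forall>i. Poly_Mapping.lookup v i \<le> Poly_Mapping.lookup w i"
  shows "w - v \<in> monomials n a"
proof -
  have "Poly_Mapping.keys (w - v) \<subseteq> Poly_Mapping.keys w"
    by (auto simp: in_keys_iff lookup_minus)
  moreover have "(\<Sum>i<n. Poly_Mapping.lookup w i) = (\<Sum>i<n. Poly_Mapping.lookup (w - v) i) + (\<Sum>i<n. Poly_Mapping.lookup v i)"
    using assms(3) by (simp add: lookup_minus sum.distrib[symmetric])
  ultimately show ?thesis
    using assms(1,2) by (auto simp: monomials_def)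
qed

definition var :: "nat \<Rightarrow> rpoly" where
  "var i = Poly_Mapping.single (Poly_Mapping.single i 1) 1"

definition sum_vars :: "nat \<Rightarrow> rpoly" where
  "sum_vars n = (\<Sum>i<n. var i)"

lemma lookup_mult_var:
  "Poly_Mapping.lookup (p * var i) w =
    (if Poly_Mapping.lookup w i = 0 then 0 else Poly_Mapping.lookup p (w - Poly_Mapping.single i 1))"
  by (auto simp: var_def lookup_mult_right lookup_single when_def)

lemma is_form_sum_vars: "is_form n 1 (sum_vars n)"
  unfolding sum_vars_def var_def
  by (intro is_form_sum) (auto simp: is_form_def monomials_def lookup_single when_def)

lemma nonneg_coeffs_sum_vars: "nonneg_coeffs (sum_vars n)"
  unfolding sum_vars_def var_def
  by (intro nonneg_coeffs_sum) (simp add: nonneg_coeffs_def lookup_single when_def)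

lemma lookup_sum_vars_power:
  assumes "w \<in> monomials n N"
  shows "Poly_Mapping.lookup (sum_vars n ^ N) w = fact N / (\<Prod>i<n. fact (Poly_Mapping.lookup w i))"
  using assms
proof (induction N arbitrary: w)
  case 0
  then have "w = 0"
    by (auto intro!: poly_mapping_eqI simp: monomials_def in_keys_iff)
  then show ?case by simp
next
  case (Suc N)
  let ?P = "\<lambda>w. (\<Prod>i<n. fact (Poly_Mapping.lookup w i) :: real)"
  have summand: "Poly_Mapping.lookup (sum_vars n ^ N * var i) w = fact N * Poly_Mapping.lookup w i / ?P w"
    if "i < n" for i
  proof (cases "Poly_Mapping.lookup w i = 0")
    case False
    let ?w' = "w - Poly_Mapping.single i 1"
    have "?w' \<in> monomials n N"
      using Suc.prems that False
      by (intro monomials_diff[where b = 1])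
         (auto simp: monomials_def lookup_single when_def)
    moreover have "?P w = ?P ?w' * Poly_Mapping.lookup w i"
      using that False
      by (simp add: prod.remove[of "{..<n}" i] lookup_minus lookup_single fact_reduce[of "Poly_Mapping.lookup w i"]
          when_def ac_simps cong: prod.cong) (auto intro!: prod.cong)
    ultimately show ?thesis
      using False by (simp add: lookup_mult_var Suc.IH)
  qed (simp add: lookup_mult_var)
  have "Poly_Mapping.lookup (sum_vars n ^ Suc N) w = (\<Sum>i<n. Poly_Mapping.lookup (sum_vars n ^ N * var i) w)"
    by (simp only: power_Suc2 sum_vars_def sum_distrib_left lookup_sum)
  also have "\<dots> = (\<Sum>i<n. fact N * real (Poly_Mapping.lookup w i) / ?P w)"
    using summand by simp
  also have "\<dots> = fact N * real (\<Sum>i<n. Poly_Mapping.lookup w i) / ?P w"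
    by (simp add: sum_divide_distrib[symmetric] sum_distrib_left)
  also have "(\<Sum>i<n. Poly_Mapping.lookup w i) = Suc N"
    using Suc.prems by (simp add: monomials_def)
  finally show ?case
    by (simp add: algebra_simps)
qed

lemma lookup_sum_vars_power_pos:
  "w \<in> monomials n N \<Longrightarrow> Poly_Mapping.lookup (sum_vars n ^ N) w > 0"
  by (simp add: lookup_sum_vars_power prod_pos)

lemma sum_vars_power_coeff_le_form:
  assumes q: "is_form n a q" and q_pos: "\<forall>w\<in>monomials n a. Poly_Mapping.lookup q w > 0"
  shows "\<exists>c>0. coeff_le (Poly_Mapping.single 0 c * sum_vars n ^ a) q"
proof -
  let ?K = "Poly_Mapping.keys (sum_vars n ^ a)"
  define c where "c = Min (insert 1 ((\<lambda>w. Poly_Mapping.lookup q w / Poly_Mapping.lookup (sum_vars n ^ a) w) ` ?K))"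
  have K_monomials: "?K \<subseteq> monomials n a"
    using is_form_power[OF is_form_sum_vars, of n a] by (simp add: is_form_def)
  have "c > 0"
    unfolding c_def using K_monomials q_pos lookup_sum_vars_power_pos by (subst Min_gr_iff) auto
  moreover have "c * Poly_Mapping.lookup (sum_vars n ^ a) w \<le> Poly_Mapping.lookup q w" for w
  proof (cases "w \<in> ?K")
    case True
    have "c \<le> Poly_Mapping.lookup q w / Poly_Mapping.lookup (sum_vars n ^ a) w"
      unfolding c_def using True by (intro Min_le) auto
    then show ?thesis
      using lookup_sum_vars_power_pos[of w n a] True K_monomials by (auto simp: field_simps)
  next
    case False
    have "Poly_Mapping.lookup q w \<ge> 0"
      using q q_pos unfolding is_form_def by (metis in_keys_iff less_imp_le order_refl subsetD)
    with False show ?thesis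
      by (simp add: in_keys_iff)
  qed
  ultimately show ?thesis
    by (auto simp: coeff_le_def)
qed

lemma form_coeff_le_sum_vars_power:
  assumes p: "is_form n a p"
  shows "\<exists>M\<ge>0. coeff_le (Poly_Mapping.single 0 (- M) * sum_vars n ^ a) p
    \<and> coeff_le p (Poly_Mapping.single 0 M * sum_vars n ^ a)"
proof -
  define M where "M = (\<Sum>w\<in>Poly_Mapping.keys p. \<bar>Poly_Mapping.lookup p w\<bar> / Poly_Mapping.lookup (sum_vars n ^ a) w)"
  have S_pos: "Poly_Mapping.lookup (sum_vars n ^ a) w > 0" if "w \<in> Poly_Mapping.keys p" for w
    using that p lookup_sum_vars_power_pos unfolding is_form_def by blast
  have "M \<ge> 0"
    unfolding M_def using S_pos by (intro sum_nonneg) (simp add: less_imp_le)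
  moreover have "\<bar>Poly_Mapping.lookup p w\<bar> \<le> M * Poly_Mapping.lookup (sum_vars n ^ a) w" for w
  proof (cases "w \<in> Poly_Mapping.keys p")
    case True
    have "\<bar>Poly_Mapping.lookup p w\<bar> / Poly_Mapping.lookup (sum_vars n ^ a) w \<le> M"
      unfolding M_def using True S_pos by (intro member_le_sum) (auto simp: less_imp_le)
    then show ?thesis
      using S_pos[OF True] by (simp add: field_simps)
  next
    case False
    then show ?thesis
      using \<open>M \<ge> 0\<close> nonneg_coeffs_power[OF nonneg_coeffs_sum_vars, of n a]
      by (simp add: in_keys_iff nonneg_coeffs_def)
  qed
  ultimately show ?thesis
    by (auto simp: coeff_le_def abs_le_iff minus_le_iff)
qed

lemma pos_form_eq_sum_vars_power_add:
  assumes f: "is_form n d f" and f_pos: "strictly_pos_coeffs n d f"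
  shows "\<exists>c>0. \<exists>C h. f = Poly_Mapping.single 0 c * sum_vars n ^ d + h
    \<and> nonneg_coeffs h \<and> coeff_le h (Poly_Mapping.single 0 C * sum_vars n ^ d)"
proof -
  obtain c where "c > 0" and f_lower: "coeff_le (Poly_Mapping.single 0 c * sum_vars n ^ d) f"
    using sum_vars_power_coeff_le_form[OF f] f_pos unfolding strictly_pos_coeffs_def by blast
  obtain C where f_upper: "coeff_le f (Poly_Mapping.single 0 C * sum_vars n ^ d)"
    using form_coeff_le_sum_vars_power[OF f] by blast
  define h where "h = f - Poly_Mapping.single 0 c * sum_vars n ^ d"
  have "nonneg_coeffs h"
    using f_lower by (simp add: h_def coeff_le_iff_nonneg_coeffs_diff)
  moreover have "coeff_le h (Poly_Mapping.single 0 C * sum_vars n ^ d)"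
    using f_upper \<open>c > 0\<close> nonneg_coeffs_power[OF nonneg_coeffs_sum_vars, of n d]
    by (auto simp: coeff_le_def nonneg_coeffs_def h_def lookup_minus intro: order_trans[rotated])
  moreover have "f = Poly_Mapping.single 0 c * sum_vars n ^ d + h"
    by (simp add: h_def)
  ultimately show ?thesis
    using \<open>c > 0\<close> by blast
qed

section \<open>Polya's theorem\<close>

text \<open>For t = 1 and x = a \<in> \<nat> this is the falling factorial a (a - 1) ... (a - k + 1);
  for t = 0 it is x ^ k.\<close>

definition shifted_power :: "real \<Rightarrow> real \<Rightarrow> nat \<Rightarrow> real" where
  "shifted_power x t k = (\<Prod>j<k. x - real j * t)"

definition shifted_eval :: "nat \<Rightarrow> rpoly \<Rightarrow> real \<Rightarrow> (nat \<Rightarrow> real) \<Rightarrow> real" where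
  "shifted_eval n p t x = (\<Sum>b\<in>Poly_Mapping.keys p.
     Poly_Mapping.lookup p b * (\<Prod>i<n. shifted_power (x i) t (Poly_Mapping.lookup b i)))"

lemma shifted_power_scale: "shifted_power (A * x) (A * t) k = A ^ k * shifted_power x t k"
proof -
  have "shifted_power (A * x) (A * t) k = (\<Prod>j<k. A * (x - real j * t))"
    by (simp add: shifted_power_def algebra_simps)
  then show ?thesis
    by (simp add: shifted_power_def prod.distrib)
qed

lemma shifted_eval_scale:
  assumes "is_form n e p"
  shows "shifted_eval n p (A * t) (\<lambda>i. A * x i) = A ^ e * shifted_eval n p t x"
proof -
  have "(\<Prod>i<n. shifted_power (A * x i) (A * t) (Poly_Mapping.lookup b i))
      = A ^ e * (\<Prod>i<n. shifted_power (x i) t (Poly_Mapping.lookup b i))"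
    if "b \<in> Poly_Mapping.keys p" for b
  proof -
    have "(\<Sum>i<n. Poly_Mapping.lookup b i) = e"
      using that assms by (auto simp: is_form_def monomials_def)
    then show ?thesis
      by (simp add: shifted_power_scale prod.distrib flip: power_sum)
  qed
  then show ?thesis
    unfolding shifted_eval_def sum_distrib_left by (intro sum.cong) simp_all
qed

lemma fact_eq_shifted_power_mult_fact:
  "b \<le> a \<Longrightarrow> (fact a :: real) = shifted_power (real a) 1 b * fact (a - b)"
proof (induction b)
  case 0
  then show ?case by (simp add: shifted_power_def)
next
  case (Suc b)
  then have "a - b = Suc (a - Suc b)"
    by simp
  then have "(fact (a - b) :: real) = real (a - b) * fact (a - Suc b)"
    by (metis fact_Suc)
  then show ?case
    using Suc by (simp add: shifted_power_def)
qed

lemma shifted_power_of_nat_eq_0: "a < b \<Longrightarrow> shifted_power (real a) 1 b = 0"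
  unfolding shifted_power_def by (rule prod_zero) auto

lemma lookup_sum_vars_power_mult:
  assumes g: "is_form n e g" and w: "w \<in> monomials n (N + e)"
  shows "Poly_Mapping.lookup (sum_vars n ^ N * g) w =
    fact N / (\<Prod>i<n. fact (Poly_Mapping.lookup w i)) * shifted_eval n g 1 (\<lambda>i. real (Poly_Mapping.lookup w i))"
proof -
  let ?P = "\<lambda>w. (\<Prod>i<n. fact (Poly_Mapping.lookup w i) :: real)"
  let ?Q = "\<lambda>b. (\<Prod>i<n. shifted_power (real (Poly_Mapping.lookup w i)) 1 (Poly_Mapping.lookup b i))"
  have "(Poly_Mapping.lookup (sum_vars n ^ N) (w - b) * Poly_Mapping.lookup g b
        when (\<forall>i. Poly_Mapping.lookup b i \<le> Poly_Mapping.lookup w i))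
      = fact N / ?P w * (Poly_Mapping.lookup g b * ?Q b)"
    if "b \<in> Poly_Mapping.keys g" for b
  proof (cases "\<forall>i. Poly_Mapping.lookup b i \<le> Poly_Mapping.lookup w i")
    case True
    have b: "b \<in> monomials n e"
      using that g by (auto simp: is_form_def)
    have factor: "?P w = ?Q b * ?P (w - b)"
      using True by (auto simp: prod.distrib[symmetric] lookup_minus intro!: prod.cong fact_eq_shifted_power_mult_fact)
    moreover have "?P w > 0" "?P (w - b) > 0"
      by (simp_all add: prod_pos)
    ultimately have "?Q b \<noteq> 0"
      by (metis mult_zero_left order_less_irrefl)
    with factor \<open>?P (w - b) > 0\<close> show ?thesis
      using True monomials_diff[OF w b] by (simp add: lookup_sum_vars_power)
  next
    case False
    then obtain i where i: "Poly_Mapping.lookup w i < Poly_Mapping.lookup b i"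
      by (auto simp: not_le)
    then have "i \<in> Poly_Mapping.keys b"
      by (simp add: in_keys_iff)
    then have "i < n"
      using that g by (auto simp: is_form_def monomials_def)
    then have "?Q b = 0"
      using i by (intro prod_zero) (auto intro!: bexI[of _ i] shifted_power_of_nat_eq_0)
    then show ?thesis
      using False by simp
  qed
  then show ?thesis
    unfolding lookup_mult_right shifted_eval_def sum_distrib_left by (intro sum.cong) simp_all
qed

lemma abs_prod_diff_le_sum:
  fixes y z :: "'a \<Rightarrow> real"
  assumes "\<And>k. k \<in> K \<Longrightarrow> \<bar>y k\<bar> \<le> 1" "\<And>k. k \<in> K \<Longrightarrow> \<bar>z k\<bar> \<le> 1"
  shows "\<bar>prod y K - prod z K\<bar> \<le> (\<Sum>k\<in>K. \<bar>y k - z k\<bar>)"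
  using assms
proof (induction K rule: infinite_finite_induct)
  case (insert a K)
  have z_bound: "\<bar>prod z K\<bar> \<le> 1"
    using insert.prems(2) unfolding abs_prod by (intro prod_le_1) auto
  have "y a * prod y K - z a * prod z K = y a * (prod y K - prod z K) + (y a - z a) * prod z K"
    by (simp add: algebra_simps)
  then have "\<bar>y a * prod y K - z a * prod z K\<bar> \<le> \<bar>y a\<bar> * \<bar>prod y K - prod z K\<bar> + \<bar>y a - z a\<bar> * \<bar>prod z K\<bar>"
    by (metis abs_mult abs_triangle_ineq)
  also have "\<dots> \<le> 1 * \<bar>prod y K - prod z K\<bar> + \<bar>y a - z a\<bar> * 1"
    using insert.prems(1)[of a] z_bound by (intro add_mono mult_mono) auto
  also have "\<dots> \<le> (\<Sum>k\<in>K. \<bar>y k - z k\<bar>) + \<bar>y a - z a\<bar>"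
    using insert.IH insert.prems by simp
  finally show ?case
    using insert.hyps by (simp add: add.commute)
qed simp_all

lemma abs_shifted_power_diff_le:
  fixes x t :: real and k m :: nat
  assumes x: "0 \<le> x" "x \<le> 1" and t: "0 \<le> t" "real m * t \<le> 1" and "k \<le> m"
  shows "\<bar>shifted_power x t k\<bar> \<le> 1" "\<bar>shifted_power x t k - x ^ k\<bar> \<le> real k * (real m * t)"
proof -
  have jt: "0 \<le> real j * t \<and> real j * t \<le> real m * t" if "j < k" for j
    using that \<open>k \<le> m\<close> t by (simp add: mult_right_mono)
  have factor: "\<bar>x - real j * t\<bar> \<le> 1" if "j < k" for j
    unfolding abs_le_iff using jt[OF that] x t by linarith
  then show "\<bar>shifted_power x t k\<bar> \<le> 1"
    unfolding shifted_power_def abs_prod by (intro prod_le_1) auto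
  have "\<bar>shifted_power x t k - x ^ k\<bar> = \<bar>(\<Prod>j<k. x - real j * t) - (\<Prod>j<k. x)\<bar>"
    by (simp add: shifted_power_def)
  also have "\<dots> \<le> (\<Sum>j<k. \<bar>(x - real j * t) - x\<bar>)"
    using factor x by (intro abs_prod_diff_le_sum) auto
  also have "\<dots> \<le> (\<Sum>j<k. real m * t)"
    using jt by (intro sum_mono) auto
  finally show "\<bar>shifted_power x t k - x ^ k\<bar> \<le> real k * (real m * t)"
    by simp
qed

lemma abs_shifted_eval_diff_le:
  fixes t :: real
  assumes p: "is_form n e p" and x: "\<forall>i<n. 0 \<le> x i \<and> x i \<le> 1" and t: "0 \<le> t" "real e * t \<le> 1"
  shows "\<bar>shifted_eval n p t x - peval n p x\<bar>
    \<le> (\<Sum>b\<in>Poly_Mapping.keys p. \<bar>Poly_Mapping.lookup p b\<bar>) * (e * e * t)"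
proof -
  have monomial: "\<bar>(\<Prod>i<n. shifted_power (x i) t (Poly_Mapping.lookup b i)) - (\<Prod>i<n. x i ^ Poly_Mapping.lookup b i)\<bar>
      \<le> e * e * t" if b: "b \<in> monomials n e" for b
  proof -
    have le_e: "Poly_Mapping.lookup b i \<le> e" if "i < n" for i
      using b that by (rule lookup_le_degree)
    have "\<bar>(\<Prod>i<n. shifted_power (x i) t (Poly_Mapping.lookup b i)) - (\<Prod>i<n. x i ^ Poly_Mapping.lookup b i)\<bar>
        \<le> (\<Sum>i<n. \<bar>shifted_power (x i) t (Poly_Mapping.lookup b i) - x i ^ Poly_Mapping.lookup b i\<bar>)"
      using x t le_e by (intro abs_prod_diff_le_sum abs_shifted_power_diff_le(1))
        (auto simp: abs_le_iff power_le_one)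
    also have "\<dots> \<le> (\<Sum>i<n. Poly_Mapping.lookup b i * (e * t))"
      using x t le_e by (intro sum_mono abs_shifted_power_diff_le(2)) auto
    also have "\<dots> = e * e * t"
      using b by (simp add: monomials_def sum_distrib_right[symmetric] flip: of_nat_sum)
    finally show ?thesis .
  qed
  have "\<bar>shifted_eval n p t x - peval n p x\<bar> = \<bar>\<Sum>b\<in>Poly_Mapping.keys p. Poly_Mapping.lookup p b *
      ((\<Prod>i<n. shifted_power (x i) t (Poly_Mapping.lookup b i)) - (\<Prod>i<n. x i ^ Poly_Mapping.lookup b i))\<bar>"
    by (simp add: shifted_eval_def peval_def right_diff_distrib sum_subtractf)
  also have "\<dots> \<le> (\<Sum>b\<in>Poly_Mapping.keys p. \<bar>Poly_Mapping.lookup p b\<bar> * (e * e * t))"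
    using p monomial unfolding is_form_def
    by (intro order_trans[OF sum_abs] sum_mono) (auto simp: abs_mult intro!: mult_left_mono)
  finally show ?thesis
    by (simp add: sum_distrib_right)
qed

lemma peval_restrict: "peval n p (restrict x {..<n}) = peval n p x"
  unfolding peval_def by (intro sum.cong refl arg_cong2[where f = "(*)"] prod.cong) auto

lemma compactin_standard_simplex:
  fixes n :: nat
  shows "compactin (product_topology (\<lambda>_. euclideanreal) {..<n})
     {x \<in> PiE {..<n} (\<lambda>_. {0..1::real}). (\<Sum>i<n. x i) = 1}"
proof -
  define T where "T = product_topology (\<lambda>_. euclideanreal) {..<n}"
  have "closedin T {x \<in> topspace T. (\<Sum>i<n. x i) \<in> {1}}"
    unfolding T_def
    by (intro closedin_continuous_map_preimage[where Y = euclideanreal] continuous_map_sum)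
       (auto intro: continuous_map_product_projection)
  moreover have "compactin T (PiE {..<n} (\<lambda>_. {0..1}))"
    unfolding T_def by (simp add: compactin_PiE)
  ultimately have "compactin T ({x \<in> topspace T. (\<Sum>i<n. x i) \<in> {1}} \<inter> PiE {..<n} (\<lambda>_. {0..1}))"
    by (rule closed_Int_compactin)
  moreover have "{x \<in> topspace T. (\<Sum>i<n. x i) \<in> {1}} \<inter> PiE {..<n} (\<lambda>_. {0..1})
      = {x \<in> PiE {..<n} (\<lambda>_. {0..1}). (\<Sum>i<n. x i) = 1}"
    by (auto simp: T_def PiE_def)
  ultimately show ?thesis
    by (simp add: T_def)
qed

lemma peval_pos_bounded_below_on_simplex:
  assumes "0 < n"
    and pos: "\<And>x. (\<forall>i<n. x i \<ge> 0) \<Longrightarrow> (\<exists>i<n. x i \<noteq> 0) \<Longrightarrow> peval n p x > 0"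
  shows "\<exists>m>0. \<forall>x. (\<forall>i<n. 0 \<le> x i) \<longrightarrow> (\<Sum>i<n. x i) = 1 \<longrightarrow> m \<le> peval n p x"
proof -
  define \<Delta> :: "(nat \<Rightarrow> real) set" where "\<Delta> = {x \<in> PiE {..<n} (\<lambda>_. {0..1}). (\<Sum>i<n. x i) = 1}"
  have cont: "continuous_map (product_topology (\<lambda>_. euclideanreal) {..<n}) euclideanreal (peval n p)"
    unfolding peval_def
    by (intro continuous_map_sum continuous_map_real_mult continuous_map_prod continuous_map_real_pow)
       (auto intro: continuous_map_product_projection)
  have "compact (peval n p ` \<Delta>)"
    using image_compactin[OF compactin_standard_simplex cont] by (simp add: \<Delta>_def)
  moreover have "(\<lambda>i\<in>{..<n}. 1 / real n) \<in> \<Delta>"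
    using \<open>0 < n\<close> by (auto simp: \<Delta>_def)
  ultimately obtain x0 where x0: "x0 \<in> \<Delta>" and min: "\<And>x. x \<in> \<Delta> \<Longrightarrow> peval n p x0 \<le> peval n p x"
    using compact_attains_inf[of "peval n p ` \<Delta>"] by blast
  have in_simplex: "restrict x {..<n} \<in> \<Delta>" if "\<forall>i<n. 0 \<le> x i" "(\<Sum>i<n. x i) = 1" for x
  proof -
    have "x i \<le> 1" if "i < n" for i
      using \<open>\<forall>i<n. 0 \<le> x i\<close> \<open>(\<Sum>i<n. x i) = 1\<close> member_le_sum[of i "{..<n}" x] that by auto
    then show ?thesis
      using that by (auto simp: \<Delta>_def)
  qed
  have "\<exists>i<n. x0 i \<noteq> 0"
  proof (rule ccontr)
    assume "\<not> (\<exists>i<n. x0 i \<noteq> 0)"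
    then have "(\<Sum>i<n. x0 i) = 0"
      by simp
    with x0 show False
      by (simp add: \<Delta>_def)
  qed
  then have "peval n p x0 > 0"
    using x0 by (intro pos) (auto simp: \<Delta>_def PiE_iff)
  moreover have "peval n p x0 \<le> peval n p x" if "\<forall>i<n. 0 \<le> x i" "(\<Sum>i<n. x i) = 1" for x
    using min[OF in_simplex[OF that]] by (simp add: peval_restrict)
  ultimately show ?thesis
    by blast
qed

lemma polya:
  assumes "0 < n" and g: "is_form n e g"
    and g_pos: "\<And>x. (\<forall>i<n. x i \<ge> 0) \<Longrightarrow> (\<exists>i<n. x i \<noteq> 0) \<Longrightarrow> peval n g x > 0"
  shows "\<exists>N. \<forall>w\<in>monomials n (N + e). Poly_Mapping.lookup (sum_vars n ^ N * g) w > 0"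
proof -
  obtain m where "m > 0" and m: "\<And>x. \<forall>i<n. 0 \<le> x i \<Longrightarrow> (\<Sum>i<n. x i) = 1 \<Longrightarrow> m \<le> peval n g x"
    using peval_pos_bounded_below_on_simplex[OF \<open>0 < n\<close> g_pos] by blast
  define G where "G = (\<Sum>b\<in>Poly_Mapping.keys g. \<bar>Poly_Mapping.lookup g b\<bar>)"
  define N where "N = nat \<lceil>G * (e * e) / m\<rceil> + 1"
  have "G \<ge> 0"
    unfolding G_def by (simp add: sum_nonneg)
  have "Poly_Mapping.lookup (sum_vars n ^ N * g) w > 0" if w: "w \<in> monomials n (N + e)" for w
  proof -
    define A where "A = real (N + e)"
    define x where "x i = real (Poly_Mapping.lookup w i) / A" for i
    have "A > 0" "G * (e * e) / m < A"
      unfolding A_def N_def by linarith+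
    then have error: "G * (e * e * (1 / A)) < m"
      using \<open>m > 0\<close> by (simp add: field_simps)
    have "(\<Sum>i<n. real (Poly_Mapping.lookup w i)) = A"
      using w by (simp add: A_def monomials_def flip: of_nat_sum)
    then have x_sum: "(\<Sum>i<n. x i) = 1"
      using \<open>A > 0\<close> by (simp add: x_def flip: sum_divide_distrib)
    have x_bound: "\<forall>i<n. 0 \<le> x i \<and> x i \<le> 1"
      using x_sum \<open>A > 0\<close> member_le_sum[of _ "{..<n}" x] by (auto simp: x_def)
    have "m - G * (e * e * (1 / A)) \<le> shifted_eval n g (1 / A) x"
      using m[of x] x_bound x_sum abs_shifted_eval_diff_le[OF g x_bound, of "1 / A"] \<open>A > 0\<close>
      by (simp add: G_def A_def abs_le_iff)
    then have "shifted_eval n g (1 / A) x > 0"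
      using error by linarith
    moreover have "shifted_eval n g 1 (\<lambda>i. real (Poly_Mapping.lookup w i)) = A ^ e * shifted_eval n g (1 / A) x"
      using shifted_eval_scale[OF g, of A "1 / A" x] \<open>A > 0\<close> by (simp add: x_def)
    ultimately show ?thesis
      using \<open>A > 0\<close> by (simp add: lookup_sum_vars_power_mult[OF g w] prod_pos)
  qed
  then show ?thesis
    by blast
qed

lemma polya_coeff_lower_bound:
  assumes "0 < n" and g: "is_form n e g"
    and g_pos: "\<And>x. (\<forall>i<n. x i \<ge> 0) \<Longrightarrow> (\<exists>i<n. x i \<noteq> 0) \<Longrightarrow> peval n g x > 0"
  shows "\<exists>N. \<exists>\<delta>>0. \<forall>K\<ge>N.
    coeff_le (Poly_Mapping.single 0 \<delta> * (sum_vars n ^ K * sum_vars n ^ e)) (sum_vars n ^ K * g)"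
proof -
  obtain N where "\<forall>w\<in>monomials n (N + e). Poly_Mapping.lookup (sum_vars n ^ N * g) w > 0"
    using polya[OF assms] by blast
  then obtain \<delta> where "\<delta> > 0"
    and \<delta>: "coeff_le (Poly_Mapping.single 0 \<delta> * sum_vars n ^ (N + e)) (sum_vars n ^ N * g)"
    using sum_vars_power_coeff_le_form[OF is_form_mult[OF is_form_power[OF is_form_sum_vars] g]] by auto
  have "coeff_le (Poly_Mapping.single 0 \<delta> * (sum_vars n ^ K * sum_vars n ^ e)) (sum_vars n ^ K * g)"
    if "N \<le> K" for K
  proof -
    have "coeff_le (sum_vars n ^ (K - N) * (Poly_Mapping.single 0 \<delta> * sum_vars n ^ (N + e)))
        (sum_vars n ^ (K - N) * (sum_vars n ^ N * g))"
      using \<delta> by (intro coeff_le_mult_left nonneg_coeffs_power nonneg_coeffs_sum_vars)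
    moreover have "K = (K - N) + N"
      using that by simp
    ultimately show ?thesis
      by (metis (no_types, lifting) mult.assoc mult.left_commute power_add)
  qed
  with \<open>\<delta> > 0\<close> show ?thesis
    by blast
qed

section \<open>Expanding powers of c P + h\<close>

lemma choose_Suc_mult_Suc: "(l choose Suc i) * Suc i = (l choose i) * (l - i)"
proof (cases l)
  case (Suc l')
  have "(Suc l' choose Suc i) * Suc i = Suc l' * (l' choose i)"
    using Suc_times_binomial[of i l'] by (simp add: mult.commute)
  also have "\<dots> = (Suc l' choose i) * (Suc l' - i)"
    using binomial_absorb_comp[of "Suc l'" i] by (simp add: mult.commute)
  finally show ?thesis
    using Suc by simp
qed simp

lemma mult_choose_le_choose_Suc:
  assumes "R * Suc i \<le> l - i"
  shows "R * (l choose i) \<le> l choose Suc i"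
proof -
  have "(R * (l choose i)) * Suc i = (l choose i) * (R * Suc i)"
    by (simp only: ac_simps)
  also have "\<dots> \<le> (l choose i) * (l - i)"
    using assms by (rule mult_le_mono2)
  also have "\<dots> = (l choose Suc i) * Suc i"
    by (rule choose_Suc_mult_Suc[symmetric])
  finally show ?thesis
    by (simp only: mult_le_cancel2)
qed

lemma power_mult_choose_le:
  fixes R :: nat
  assumes "(R + 1) * (k + j) \<le> l"
  shows "R ^ j * (l choose k) \<le> l choose (k + j)"
  using assms
proof (induction j)
  case (Suc j)
  have "R * Suc (k + j) \<le> l - (k + j)"
    using Suc.prems by (simp add: algebra_simps)
  have "R ^ Suc j * (l choose k) = R * (R ^ j * (l choose k))"
    by simp
  also have "\<dots> \<le> R * (l choose (k + j))"
    using Suc by simp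
  also have "\<dots> \<le> l choose Suc (k + j)"
    by (rule mult_choose_le_choose_Suc) fact
  finally show ?case
    by simp
qed simp

lemma choose_mult_power_le:
  fixes c :: real and R :: nat
  assumes "(R + 1) * (2 * N) \<le> l" "k < N" "0 \<le> c"
  shows "real (l choose k) * c ^ k * (c * R) ^ N \<le> real (l choose (k + N)) * c ^ (k + N)"
proof -
  have "(R + 1) * (k + N) \<le> (R + 1) * (2 * N)"
    using assms(2) by (intro mult_le_mono2) simp
  then have "R ^ N * (l choose k) \<le> l choose (k + N)"
    using assms(1) by (intro power_mult_choose_le) linarith
  then have "real (R ^ N * (l choose k)) * c ^ (k + N) \<le> real (l choose (k + N)) * c ^ (k + N)"
    using assms(3) by (intro mult_right_mono of_nat_mono) simp_all
  then show ?thesis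
    by (simp add: power_mult_distrib power_add ac_simps)
qed

lemma sum_atMost_nonneg_pairing:
  fixes F :: "nat \<Rightarrow> real"
  assumes "2 * N \<le> l"
    and pair: "\<And>k. k < N \<Longrightarrow> 0 \<le> F k + F (k + N)" and tail: "\<And>k. N \<le> k \<Longrightarrow> 0 \<le> F k"
  shows "0 \<le> (\<Sum>k\<le>l. F k)"
proof -
  have "{..l} = ({..<N} \<union> {N..<2 * N}) \<union> {2 * N..l}"
    using assms(1) by auto
  then have "sum F {..l} = sum F ({..<N} \<union> {N..<2 * N}) + sum F {2 * N..l}"
    by (simp only:) (rule sum.union_disjoint; auto)
  also have "sum F ({..<N} \<union> {N..<2 * N}) = sum F {..<N} + sum F {N..<2 * N}"
    by (rule sum.union_disjoint) auto
  also have "sum F {N..<2 * N} = (\<Sum>k<N. F (k + N))"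
    using sum.shift_bounds_nat_ivl[of F 0 N N] by (simp add: atLeast0LessThan mult_2)
  finally have "sum F {..l} = (\<Sum>k<N. F k + F (k + N)) + sum F {2 * N..l}"
    by (simp add: sum.distrib)
  moreover have "0 \<le> (\<Sum>k<N. F k + F (k + N))"
    using pair by (intro sum_nonneg) simp
  moreover have "0 \<le> sum F {2 * N..l}"
    using tail by (intro sum_nonneg) simp
  ultimately show ?thesis
    by linarith
qed

text \<open>Each possibly negative term k < N is absorbed by the term k + N.\<close>

lemma binomial_sum_nonneg:
  fixes V W :: "nat \<Rightarrow> real" and c M \<delta> K :: real and R :: nat
  assumes "(R + 1) * (2 * N) \<le> l" "0 \<le> c" "0 \<le> M" "0 \<le> \<delta>" "M * K \<le> \<delta> * (c * R) ^ N"
    and W_nonneg: "\<And>k. 0 \<le> W k"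
    and V_lower: "\<And>k. - M * W k \<le> V k"
    and V_lower_tail: "\<And>k. N \<le> k \<Longrightarrow> \<delta> * W k \<le> V k"
    and W_shift: "\<And>k. k + N \<le> l \<Longrightarrow> W k \<le> K * W (k + N)"
  shows "0 \<le> (\<Sum>k\<le>l. real (l choose k) * c ^ k * V k)"
proof (rule sum_atMost_nonneg_pairing)
  let ?F = "\<lambda>k. real (l choose k) * c ^ k * V k"
  show "2 * N \<le> l"
    by (rule le_trans[OF _ assms(1)]) simp
  show "0 \<le> ?F k" if "N \<le> k" for k
  proof -
    have "0 \<le> V k"
      using V_lower_tail[OF that] mult_nonneg_nonneg[OF \<open>0 \<le> \<delta>\<close> W_nonneg[of k]] by linarith
    then show ?thesis
      using \<open>0 \<le> c\<close> by simp
  qed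
  show "0 \<le> ?F k + ?F (k + N)" if "k < N" for k
  proof -
    define b where "b = real (l choose k) * c ^ k"
    have "0 \<le> b"
      unfolding b_def using \<open>0 \<le> c\<close> by simp
    have "b * (c * R) ^ N \<le> real (l choose (k + N)) * c ^ (k + N)"
      unfolding b_def using assms(1) that \<open>0 \<le> c\<close> by (rule choose_mult_power_le)
    have "b * (M * K) \<le> b * (\<delta> * (c * R) ^ N)"
      using assms(5) \<open>0 \<le> b\<close> by (rule mult_left_mono)
    also have "\<dots> = \<delta> * (b * (c * R) ^ N)"
      by (simp only: ac_simps)
    also have "\<dots> \<le> \<delta> * (real (l choose (k + N)) * c ^ (k + N))"
      using \<open>b * (c * R) ^ N \<le> _\<close> \<open>0 \<le> \<delta>\<close> by (rule mult_left_mono)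
    finally have "b * (M * K) * W (k + N) \<le> \<delta> * (real (l choose (k + N)) * c ^ (k + N)) * W (k + N)"
      using W_nonneg by (rule mult_right_mono)
    also have "\<dots> = real (l choose (k + N)) * c ^ (k + N) * (\<delta> * W (k + N))"
      by (simp only: ac_simps)
    also have "\<dots> \<le> ?F (k + N)"
      using V_lower_tail[of "k + N"] \<open>0 \<le> c\<close> by (intro mult_left_mono) simp_all
    moreover have "- (b * (M * K) * W (k + N)) \<le> ?F k"
    proof -
      have "M * W k \<le> M * (K * W (k + N))"
        using W_shift[of k] that assms(1) \<open>0 \<le> M\<close> by (simp add: mult_left_mono)
      then have "b * (- M * (K * W (k + N))) \<le> b * (- M * W k)"
        using \<open>0 \<le> b\<close> by (simp add: mult_left_mono)
      also have "\<dots> \<le> ?F k"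
        using mult_left_mono[OF V_lower[of k] \<open>0 \<le> b\<close>] by (simp add: b_def)
      finally show ?thesis
        by (simp add: algebra_simps)
    qed
    ultimately show ?thesis
      by linarith
  qed
qed

lemma single_0_power: "Poly_Mapping.single 0 c ^ k = Poly_Mapping.single (0::'a::comm_monoid_add) (c ^ k)"
  by (induction k) (simp_all add: mult_single)

lemma ex_nat_mult_power_ge:
  fixes x y :: real
  assumes "0 < N" "0 < y"
  shows "\<exists>R::nat. x \<le> y * real R ^ N"
proof
  define R where "R = nat \<lceil>x / y\<rceil> + 1"
  have "x / y \<le> real R"
    unfolding R_def by linarith
  also have "\<dots> \<le> real R ^ N"
    using power_increasing[of 1 N "real R"] assms(1) by (simp add: R_def)
  finally show "x \<le> y * real R ^ N"
    using assms(2) by (simp add: pos_divide_le_eq mult.commute)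
qed

lemma binomial_single_0_mult:
  fixes P h :: "'a::comm_monoid_add \<Rightarrow>\<^sub>0 real"
  shows "(Poly_Mapping.single 0 c * P + h) ^ l
    = (\<Sum>k\<le>l. Poly_Mapping.single 0 (real (l choose k) * c ^ k) * (h ^ (l - k) * P ^ k))"
proof -
  have "Poly_Mapping.single (0::'a) (real (l choose k) * c ^ k) = of_nat (l choose k) * Poly_Mapping.single 0 c ^ k"
    for k
    by (simp add: single_0_power mult_single flip: single_of_nat)
  then show ?thesis
    unfolding binomial_ring by (simp add: power_mult_distrib ac_simps)
qed

lemma coeff_le_power_shift:
  fixes P E h :: "'a::comm_monoid_add \<Rightarrow>\<^sub>0 real"
  assumes h: "nonneg_coeffs h" and P: "nonneg_coeffs P" and E: "nonneg_coeffs E"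
    and h_le: "coeff_le h (Poly_Mapping.single 0 C * P)" and "k + N \<le> l"
  shows "coeff_le (h ^ (l - k) * P ^ k * E)
    (Poly_Mapping.single 0 (C ^ N) * (h ^ (l - (k + N)) * P ^ (k + N) * E))"
proof -
  have "coeff_le (h ^ N) ((Poly_Mapping.single 0 C * P) ^ N)"
    using h h_le by (rule coeff_le_power)
  then have "coeff_le (h ^ (l - (k + N)) * P ^ k * E * h ^ N)
      (h ^ (l - (k + N)) * P ^ k * E * (Poly_Mapping.single 0 C * P) ^ N)"
    using h P E by (intro coeff_le_mult_left nonneg_coeffs_mult nonneg_coeffs_power)
  moreover have "l - k = (l - (k + N)) + N"
    using assms(5) by simp
  ultimately show ?thesis
    by (simp add: power_add power_mult_distrib single_0_power ac_simps)
qed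

lemma nonneg_coeffs_power_mult:
  fixes P E h g :: "'a::comm_monoid_add \<Rightarrow>\<^sub>0 real"
  assumes P: "nonneg_coeffs P" and E: "nonneg_coeffs E" and h: "nonneg_coeffs h"
    and h_le: "coeff_le h (Poly_Mapping.single 0 C * P)"
    and g_lower: "coeff_le (Poly_Mapping.single 0 (- M) * E) g"
    and g_lower_tail: "\<And>k. N \<le> k \<Longrightarrow> coeff_le (Poly_Mapping.single 0 \<delta> * (P ^ k * E)) (P ^ k * g)"
    and "0 < N" "0 < c" "0 < \<delta>" "0 \<le> M"
  shows "\<exists>l\<ge>1. nonneg_coeffs ((Poly_Mapping.single 0 c * P + h) ^ l * g)"
proof -
  obtain R :: nat where R: "M * C ^ N \<le> \<delta> * (c * R) ^ N"
    using ex_nat_mult_power_ge[of N "\<delta> * c ^ N" "M * C ^ N"] \<open>0 < N\<close> \<open>0 < c\<close> \<open>0 < \<delta>\<close>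
    by (auto simp: power_mult_distrib ac_simps)
  define l where "l = (R + 1) * (2 * N)"
  let ?H = "\<lambda>k. h ^ (l - k) * P ^ k"
  have H: "nonneg_coeffs (?H k)" for k
    using h P by (intro nonneg_coeffs_mult nonneg_coeffs_power)
  have "nonneg_coeffs ((Poly_Mapping.single 0 c * P + h) ^ l * g)"
    unfolding nonneg_coeffs_def
  proof
    fix w
    have "0 \<le> (\<Sum>k\<le>l. real (l choose k) * c ^ k * Poly_Mapping.lookup (?H k * g) w)"
    proof (rule binomial_sum_nonneg[where R = R and N = N and M = M and \<delta> = \<delta> and K = "C ^ N"
          and W = "\<lambda>k. Poly_Mapping.lookup (?H k * E) w"])
      show "0 \<le> Poly_Mapping.lookup (?H k * E) w" for k
        using nonneg_coeffs_mult[OF H E] by (simp add: nonneg_coeffs_def)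
      show "- M * Poly_Mapping.lookup (?H k * E) w \<le> Poly_Mapping.lookup (?H k * g) w" for k
        using coeff_le_mult_left[OF H g_lower] by (simp add: coeff_le_def mult.left_commute)
      show "\<delta> * Poly_Mapping.lookup (?H k * E) w \<le> Poly_Mapping.lookup (?H k * g) w" if "N \<le> k" for k
        using coeff_le_mult_left[OF nonneg_coeffs_power[OF h] g_lower_tail[OF that]]
        by (simp add: coeff_le_def mult.left_commute mult.assoc)
      show "Poly_Mapping.lookup (?H k * E) w \<le> C ^ N * Poly_Mapping.lookup (?H (k + N) * E) w"
        if "k + N \<le> l" for k
        using coeff_le_power_shift[OF h P E h_le that] by (simp add: coeff_le_def)
    qed (use R \<open>0 < c\<close> \<open>0 < \<delta>\<close> \<open>0 \<le> M\<close> in \<open>simp_all add: l_def\<close>)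
    then show "0 \<le> Poly_Mapping.lookup ((Poly_Mapping.single 0 c * P + h) ^ l * g) w"
      by (simp add: binomial_single_0_mult sum_distrib_right lookup_sum mult.assoc)
  qed
  moreover have "1 \<le> l"
    using \<open>0 < N\<close> by (simp add: l_def)
  ultimately show ?thesis
    by blast
qed

theorem lemma3p2:
  fixes n d e :: nat and f g :: rpoly
  assumes f_form: "is_form n d f"
    and f_pos: "strictly_pos_coeffs n d f"
    and f_noncst: "nonconstant f"
    and g_form: "is_form n e g"
    and g_pos: "\<And>x. (\<forall>i<n. x i \<ge> 0) \<Longrightarrow> (\<exists>i<n. x i \<noteq> 0) \<Longrightarrow> peval n g x > 0"
  shows "\<exists>l::nat. l \<ge> 1 \<and> (\<forall>w. Poly_Mapping.lookup (f ^ l * g) w \<ge> 0)"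
proof -
  let ?S = "sum_vars n"
  have "0 < n" "0 < d"
    using nonconstant_form_pos[OF f_form f_noncst] by auto
  obtain c C h where "c > 0" and f: "f = Poly_Mapping.single 0 c * ?S ^ d + h"
    and h: "nonneg_coeffs h" "coeff_le h (Poly_Mapping.single 0 C * ?S ^ d)"
    using pos_form_eq_sum_vars_power_add[OF f_form f_pos] by blast
  obtain M where "M \<ge> 0" and g_lower: "coeff_le (Poly_Mapping.single 0 (- M) * ?S ^ e) g"
    using form_coeff_le_sum_vars_power[OF g_form] by blast
  obtain N \<delta> where "\<delta> > 0"
    and g_lower_tail: "\<And>K. N \<le> K \<Longrightarrow> coeff_le (Poly_Mapping.single 0 \<delta> * (?S ^ K * ?S ^ e)) (?S ^ K * g)"
    using polya_coeff_lower_bound[OF \<open>0 < n\<close> g_form g_pos] by blast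
  have "N \<le> d * k" if "Suc N \<le> k" for k
    using that \<open>0 < d\<close> by (simp add: le_trans[OF _ mult_le_mono1[of 1 d k]])
  then have "\<And>k. Suc N \<le> k \<Longrightarrow>
      coeff_le (Poly_Mapping.single 0 \<delta> * ((?S ^ d) ^ k * ?S ^ e)) ((?S ^ d) ^ k * g)"
    using g_lower_tail by (simp flip: power_mult)
  then obtain l where "l \<ge> 1" "nonneg_coeffs (f ^ l * g)"
    unfolding f using nonneg_coeffs_power_mult[OF _ _ h g_lower] \<open>c > 0\<close> \<open>\<delta> > 0\<close> \<open>M \<ge> 0\<close>
      nonneg_coeffs_power[OF nonneg_coeffs_sum_vars] by blast
  then show ?thesis
    by (auto simp: nonneg_coeffs_def)
qed

end
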